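(* Let $A$ be a real Baer von Neumann regular poring, let $\mathfrak{p}\in\mathrm{Spec}\,A$ and let $B=\prod_{\mathfrak{q}\in\mathrm{Spec}\,A}K_\mathfrak{q}$ be an epof of $A$. Let $e\in B$ be the idempotent with $e(\mathfrak{q})=1$ for $\mathfrak{q}\neq\mathfrak{p}$ and $e(\mathfrak{p})=0$. Then $\mathfrak{p}$ is an isolated point of $\mathrm{Spec}\,A$ if and only if there is an ideal $I$ of $B$ with $I\subset eB$ such that $B/I$ is an essential extension of $A$ (via $A\to B\to B/I$).
   Context: All rings are commutative and unitary. A poring is a ring $A$ with a partial ordering $A^+$ (closed under addition and multiplication, containing all squares). A ring is real if $\sum a_i^2=0$ implies all $a_i=0$; von Neumann regular if every $a$ has $b$ with $a=a^2b$; Baer if the annihilator of every subset is generated by an idempotent. An epof of $A$ is the poring $B=\prod_{\mathfrak{q}\in\mathrm{Spec}\,A}K_\mathfrak{q}$ with $B^+=B^2$, each $K_\mathfrak{q}$ a real closed field algebraic over $\mathrm{qf}(A/\mathfrak{q})$ with $A^+/\mathfrak{q}\subset K_\mathfrak{q}^2$, $A$ embedded diagonally; $b(\mathfrak{q})$ denotes the $\mathfrak{q}$-component of $b\in B$. $A\to D$ is an essential extension if it is injective and every nonzero ideal of $D$ meets the image of $A$ nontrivially. A point is isolated if its singleton is clopen. *)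

theory Defs
  imports "HOL-Algebra.QuotRing"
begin

(* Poring: commutative ring A with a partial ordering given by the positive cone P *)
definition poring :: "('a, 'm) ring_scheme \<Rightarrow> 'a set \<Rightarrow> bool" where
  "poring A P \<longleftrightarrow> cring A \<and> P \<subseteq> carrier A
     \<and> (\<forall>x\<in>P. \<forall>y\<in>P. x \<oplus>\<^bsub>A\<^esub> y \<in> P \<and> x \<otimes>\<^bsub>A\<^esub> y \<in> P)
     \<and> (\<forall>x\<in>carrier A. x \<otimes>\<^bsub>A\<^esub> x \<in> P)
     \<and> (\<forall>x\<in>P. \<ominus>\<^bsub>A\<^esub> x \<in> P \<longrightarrow> x = \<zero>\<^bsub>A\<^esub>)"

definition real_ring :: "('a, 'm) ring_scheme \<Rightarrow> bool" where
  "real_ring A \<longleftrightarrow> (\<forall>(n::nat) (a::nat \<Rightarrow> 'a). (\<forall>i<n. a i \<in> carrier A) \<longrightarrow>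
      finsum A (\<lambda>i. a i \<otimes>\<^bsub>A\<^esub> a i) {..<n} = \<zero>\<^bsub>A\<^esub> \<longrightarrow> (\<forall>i<n. a i = \<zero>\<^bsub>A\<^esub>))"

definition von_neumann_regular :: "('a, 'm) ring_scheme \<Rightarrow> bool" where
  "von_neumann_regular A \<longleftrightarrow>
     (\<forall>a\<in>carrier A. \<exists>b\<in>carrier A. a = a \<otimes>\<^bsub>A\<^esub> a \<otimes>\<^bsub>A\<^esub> b)"

definition annihilator :: "('a, 'm) ring_scheme \<Rightarrow> 'a set \<Rightarrow> 'a set" where
  "annihilator A S = {x \<in> carrier A. \<forall>s\<in>S. x \<otimes>\<^bsub>A\<^esub> s = \<zero>\<^bsub>A\<^esub>}"

definition baer_ring :: "('a, 'm) ring_scheme \<Rightarrow> bool" where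
  "baer_ring A \<longleftrightarrow> (\<forall>S \<subseteq> carrier A. \<exists>f\<in>carrier A. f \<otimes>\<^bsub>A\<^esub> f = f \<and>
      annihilator A S = {f \<otimes>\<^bsub>A\<^esub> x | x. x \<in> carrier A})"

definition Spec :: "('a, 'm) ring_scheme \<Rightarrow> 'a set set" where
  "Spec A = {q. primeideal q A}"

definition zariski_closed :: "('a, 'm) ring_scheme \<Rightarrow> 'a set set \<Rightarrow> bool" where
  "zariski_closed A C \<longleftrightarrow> (\<exists>S \<subseteq> carrier A. C = {q \<in> Spec A. S \<subseteq> q})"

definition zariski_open :: "('a, 'm) ring_scheme \<Rightarrow> 'a set set \<Rightarrow> bool" where
  "zariski_open A U \<longleftrightarrow> U \<subseteq> Spec A \<and> zariski_closed A (Spec A - U)"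

definition isolated_point :: "('a, 'm) ring_scheme \<Rightarrow> 'a set \<Rightarrow> bool" where
  "isolated_point A p \<longleftrightarrow> p \<in> Spec A \<and> zariski_open A {p} \<and> zariski_closed A {p}"

definition real_closed_field :: "('b, 'm) ring_scheme \<Rightarrow> bool" where
  "real_closed_field F \<longleftrightarrow> field F
     \<and> (\<forall>(n::nat) (x::nat \<Rightarrow> 'b). (\<forall>i<n. x i \<in> carrier F) \<longrightarrow>
          finsum F (\<lambda>i. x i \<otimes>\<^bsub>F\<^esub> x i) {..<n} \<noteq> \<ominus>\<^bsub>F\<^esub> \<one>\<^bsub>F\<^esub>)
     \<and> (\<forall>x\<in>carrier F. \<exists>y\<in>carrier F. x = y \<otimes>\<^bsub>F\<^esub> y \<or> \<ominus>\<^bsub>F\<^esub> x = y \<otimes>\<^bsub>F\<^esub> y)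
     \<and> (\<forall>(n::nat) (c::nat \<Rightarrow> 'b). odd n \<longrightarrow> (\<forall>i\<le>n. c i \<in> carrier F) \<longrightarrow> c n \<noteq> \<zero>\<^bsub>F\<^esub> \<longrightarrow>
          (\<exists>x\<in>carrier F. finsum F (\<lambda>i. c i \<otimes>\<^bsub>F\<^esub> x [^]\<^bsub>F\<^esub> i) {..n} = \<zero>\<^bsub>F\<^esub>))"

definition algebraic_over :: "('b, 'm) ring_scheme \<Rightarrow> 'b set \<Rightarrow> 'b \<Rightarrow> bool" where
  "algebraic_over F k x \<longleftrightarrow> (\<exists>(n::nat) (c::nat \<Rightarrow> 'b). (\<forall>i\<le>n. c i \<in> k) \<and> c n \<noteq> \<zero>\<^bsub>F\<^esub>
       \<and> finsum F (\<lambda>i. c i \<otimes>\<^bsub>F\<^esub> x [^]\<^bsub>F\<^esub> i) {..n} = \<zero>\<^bsub>F\<^esub>)"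

(* Image of qf(A/q) in K, given the ring hom phi : A -> K with kernel q *)
definition qf_image :: "('a, 'm) ring_scheme \<Rightarrow> 'b ring \<Rightarrow> ('a \<Rightarrow> 'b) \<Rightarrow> 'a set \<Rightarrow> 'b set" where
  "qf_image A K phi q = {phi a \<otimes>\<^bsub>K\<^esub> inv\<^bsub>K\<^esub> (phi s) | a s. a \<in> carrier A \<and> s \<in> carrier A - q}"

definition prod_ring :: "'i set \<Rightarrow> ('i \<Rightarrow> 'b ring) \<Rightarrow> ('i \<Rightarrow> 'b) ring" where
  "prod_ring I K = \<lparr>carrier = (PiE I (\<lambda>q. carrier (K q))),
      mult = (\<lambda>x y. restrict (\<lambda>q. x q \<otimes>\<^bsub>K q\<^esub> y q) I),
      one = (restrict (\<lambda>q. \<one>\<^bsub>K q\<^esub>) I),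
      zero = (restrict (\<lambda>q. \<zero>\<^bsub>K q\<^esub>) I),
      add = (\<lambda>x y. restrict (\<lambda>q. x q \<oplus>\<^bsub>K q\<^esub> y q) I)\<rparr>"

definition diag_map :: "('a, 'm) ring_scheme \<Rightarrow> ('a set \<Rightarrow> 'a \<Rightarrow> 'b) \<Rightarrow> 'a \<Rightarrow> ('a set \<Rightarrow> 'b)" where
  "diag_map A phi a = (\<lambda>q\<in>Spec A. phi q a)"

(* B = prod K_q (with B^+ = B^2) is an epof of the poring (A,P); phi q : A -> K q is the
   canonical map A -> A/q -> qf(A/q) -> K q *)
definition epof :: "('a, 'm) ring_scheme \<Rightarrow> 'a set \<Rightarrow> ('a set \<Rightarrow> 'b ring) \<Rightarrow> ('a set \<Rightarrow> 'a \<Rightarrow> 'b) \<Rightarrow> bool" where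
  "epof A P K phi \<longleftrightarrow> (\<forall>q\<in>Spec A.
       real_closed_field (K q)
     \<and> phi q \<in> ring_hom A (K q)
     \<and> {a \<in> carrier A. phi q a = \<zero>\<^bsub>K q\<^esub>} = q
     \<and> (\<forall>x\<in>carrier (K q). algebraic_over (K q) (qf_image A (K q) (phi q) q) x)
     \<and> (\<forall>a\<in>P. \<exists>y\<in>carrier (K q). phi q a = y \<otimes>\<^bsub>K q\<^esub> y))"

definition essential_extension :: "('a, 'm) ring_scheme \<Rightarrow> ('d, 'n) ring_scheme \<Rightarrow> ('a \<Rightarrow> 'd) \<Rightarrow> bool" where
  "essential_extension A D f \<longleftrightarrow> f \<in> ring_hom A D \<and> inj_on f (carrier A)
     \<and> (\<forall>J. ideal J D \<and> J \<noteq> {\<zero>\<^bsub>D\<^esub>} \<longrightarrow> (\<exists>a\<in>carrier A. f a \<in> J \<and> f a \<noteq> \<zero>\<^bsub>D\<^esub>))"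

end

theory Submission
  imports Defs "HOL-Algebra.Ring_Divisibility"
begin

text \<open>In a von Neumann regular ring every element has an idempotent associate; hence prime ideals
  are pairwise incomparable and no nonzero element lies in all of them. So \<open>p\<close> is isolated in
  \<open>Spec A\<close> iff some element of \<open>A\<close> lies in every prime except \<open>p\<close>, and then the associated
  idempotent maps to the point idempotent \<open>\<delta> = 1 - e\<close> of \<open>B\<close>.

  If \<open>p\<close> is isolated, take by Zorn an ideal \<open>I \<subseteq> eB\<close> maximal with \<open>I \<inter> A = 0\<close>. An ideal of \<open>B\<close>
  strictly above \<open>I\<close> either leaves \<open>eB\<close>, and then contains \<open>\<delta> \<in> A\<close>, or stays inside \<open>eB\<close> and
  meets \<open>A\<close> by maximality; so \<open>B/I\<close> is essential over \<open>A\<close>.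

  Conversely, if \<open>B/I\<close> is essential over \<open>A\<close>, the ideal \<open>{x. e x \<in> I}\<close> strictly contains \<open>I\<close>
  (it contains \<open>\<delta>\<close>), so it contains some \<open>a \<in> A\<close> outside \<open>I\<close>. Then \<open>e a \<in> I\<close> forces
  \<open>a \<notin> p\<close>, and for a prime \<open>q \<noteq> p\<close> and \<open>u \<in> p - q\<close> it gives \<open>a u \<in> I \<inter> A = 0\<close>, so
  \<open>a \<in> q\<close>: the element \<open>a\<close> cuts out \<open>{p}\<close>.\<close>

lemma (in ideal) compl_pair_imp_carrier:
  assumes "u \<in> I" "\<one> \<ominus> u \<in> I"
  shows "I = carrier R"
proof -
  have "u \<in> carrier R" using assms(1) Icarr by blast
  then have "\<one> = u \<oplus> (\<one> \<ominus> u)" by algebra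
  then have "\<one> \<in> I" using assms additive_subgroup.a_closed[OF ideal.axioms(1)[OF is_ideal]] by metis
  then show ?thesis by (rule one_imp_carrier)
qed

context cring
begin

lemma vnr_ex_idempotent_generator:
  assumes "von_neumann_regular R" "x \<in> carrier R"
  obtains u y where "u \<in> carrier R" "y \<in> carrier R" "u \<otimes> u = u" "u = x \<otimes> y" "x \<otimes> u = x"
proof -
  obtain y where y: "y \<in> carrier R" "x = x \<otimes> x \<otimes> y"
    using assms unfolding von_neumann_regular_def by blast
  have "(x \<otimes> y) \<otimes> (x \<otimes> y) = (x \<otimes> x \<otimes> y) \<otimes> y" "x \<otimes> (x \<otimes> y) = x \<otimes> x \<otimes> y"
    using y(1) assms(2) by algebra+
  with y have "(x \<otimes> y) \<otimes> (x \<otimes> y) = x \<otimes> y" "x \<otimes> (x \<otimes> y) = x" by simp_all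
  then show thesis using that y(1) assms(2) by blast
qed

lemma primeideal_idempotent_cases:
  assumes "primeideal q R" "u \<in> carrier R" "u \<otimes> u = u"
  shows "u \<in> q \<or> \<one> \<ominus> u \<in> q"
proof -
  interpret primeideal q R by fact
  have "u \<otimes> (\<one> \<ominus> u) = u \<ominus> u \<otimes> u" using assms(2) by algebra
  then have "u \<otimes> (\<one> \<ominus> u) = \<zero>" using assms(2,3) by simp
  then show ?thesis using I_prime assms(2) zero_closed by auto
qed

lemma vnr_primeideal_incomparable:
  assumes "von_neumann_regular R" "primeideal p R" "primeideal q R" "p \<subseteq> q"
  shows "p = q"
proof (rule ccontr)
  assume "p \<noteq> q"
  with assms(4) obtain x where x: "x \<in> q" "x \<notin> p" by blast
  interpret p: primeideal p R by fact
  interpret q: primeideal q R by fact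
  obtain u y where u: "u \<in> carrier R" "y \<in> carrier R" "u \<otimes> u = u" "u = x \<otimes> y" "x \<otimes> u = x"
    using vnr_ex_idempotent_generator[OF assms(1) q.Icarr[OF x(1)]] .
  have "u \<in> q" using q.I_r_closed[OF x(1) u(2)] u(4) by simp
  moreover have "u \<notin> p" using p.I_l_closed[OF _ q.Icarr[OF x(1)]] u(5) x(2) by metis
  moreover have "u \<in> p \<or> \<one> \<ominus> u \<in> p" using primeideal_idempotent_cases[OF assms(2) u(1,3)] .
  ultimately have "q = carrier R" using q.compl_pair_imp_carrier assms(4) by blast
  then show False using q.I_notcarr by simp
qed

end

lemma (in ring) ex_maximal_ideal_with:
  assumes "ideal I R" "Q I"
    and chain: "\<And>C. C \<noteq> {} \<Longrightarrow> subset.chain {J. ideal J R \<and> Q J} C \<Longrightarrow> Q (\<Union>C)"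
  obtains M where "ideal M R" "Q M" "\<And>J. ideal J R \<Longrightarrow> Q J \<Longrightarrow> M \<subseteq> J \<Longrightarrow> J = M"
proof -
  have "\<exists>M\<in>{J. ideal J R \<and> Q J}. \<forall>J\<in>{J. ideal J R \<and> Q J}. M \<subseteq> J \<longrightarrow> J = M"
  proof (rule subset_Zorn_nonempty)
    fix C assume C: "C \<noteq> {}" "subset.chain {J. ideal J R \<and> Q J} C"
    then have "subset.chain {J. ideal J R} C" unfolding pred_on.chain_def by blast
    then have "ideal (\<Union>C) R" using chain_Union_is_ideal[of C] C(1) by simp
    with chain[OF C] show "\<Union>C \<in> {J. ideal J R \<and> Q J}" by simp
  qed (use assms(1,2) in blast)
  then show thesis using that by blast
qed

lemma (in ring) ex_maximalideal_superset:
  assumes "ideal I R" "\<one> \<notin> I"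
  obtains M where "maximalideal M R" "I \<subseteq> M"
proof -
  obtain M where M: "ideal M R" "I \<subseteq> M \<and> \<one> \<notin> M"
    and max: "\<And>J. ideal J R \<Longrightarrow> I \<subseteq> J \<and> \<one> \<notin> J \<Longrightarrow> M \<subseteq> J \<Longrightarrow> J = M"
    by (rule ex_maximal_ideal_with[of I "\<lambda>J. I \<subseteq> J \<and> \<one> \<notin> J"])
      (use assms in \<open>auto simp: pred_on.chain_def\<close>)
  have "maximalideal M R"
  proof (rule maximalidealI[OF M(1)])
    show "carrier R \<noteq> M" using M(2) by auto
    fix J assume "ideal J R" "M \<subseteq> J" "J \<subseteq> carrier R"
    then show "J = M \<or> J = carrier R"
      using max M(2) ideal.one_imp_carrier by blast
  qed
  then show thesis using that M(2) by blast
qed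

lemma (in cring) vnr_ex_primeideal_not_mem:
  assumes "von_neumann_regular R" "a \<in> carrier R" "a \<noteq> \<zero>"
  obtains q where "primeideal q R" "a \<notin> q"
proof -
  obtain u y where u: "u \<in> carrier R" "y \<in> carrier R" "u \<otimes> u = u" "u = a \<otimes> y" "a \<otimes> u = a"
    using vnr_ex_idempotent_generator[OF assms(1,2)] .
  have compl: "\<one> \<ominus> u \<in> carrier R" using u(1) by simp
  have "\<one> \<notin> PIdl (\<one> \<ominus> u)"
  proof
    assume "\<one> \<in> PIdl (\<one> \<ominus> u)"
    then obtain r where r: "r \<in> carrier R" "\<one> = r \<otimes> (\<one> \<ominus> u)" unfolding cgenideal_def by blast
    have "u = (r \<otimes> (\<one> \<ominus> u)) \<otimes> u" using r(2) u(1) by simp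
    also have "\<dots> = r \<otimes> (u \<ominus> u \<otimes> u)" using r(1) u(1) by algebra
    finally have "u = r \<otimes> (u \<ominus> u \<otimes> u)" .
    then have "u = \<zero>" using u(1,3) r(1) by (simp add: minus_eq r_neg)
    then show False using u(5) assms(3) assms(2) by simp
  qed
  then obtain M where M: "maximalideal M R" "PIdl (\<one> \<ominus> u) \<subseteq> M"
    using ex_maximalideal_superset cgenideal_ideal[OF compl] by blast
  interpret M: maximalideal M R by fact
  have "u \<notin> M"
    using M.compl_pair_imp_carrier M.I_notcarr M(2) cgenideal_self[OF compl] by blast
  then have "a \<notin> M" using u(2,4) M.I_r_closed by blast
  then show thesis using that maximalideal_prime[OF M(1)] by blast
qed

lemma (in cring) vnr_isolated_point_iff:
  assumes "von_neumann_regular R" "p \<in> Spec R"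
  shows "isolated_point R p \<longleftrightarrow> (\<exists>a\<in>carrier R. a \<notin> p \<and> (\<forall>q\<in>Spec R. q \<noteq> p \<longrightarrow> a \<in> q))"
proof
  assume "isolated_point R p"
  then have "zariski_closed R (Spec R - {p})" by (simp add: isolated_point_def zariski_open_def)
  then obtain S where S: "S \<subseteq> carrier R" "Spec R - {p} = {q \<in> Spec R. S \<subseteq> q}"
    unfolding zariski_closed_def by blast
  have V: "q \<noteq> p \<longleftrightarrow> S \<subseteq> q" if "q \<in> Spec R" for q
    using arg_cong[OF S(2), of "\<lambda>X. q \<in> X"] that by simp
  then obtain s where "s \<in> S" "s \<notin> p" using assms(2) by blast
  with S(1) V show "\<exists>a\<in>carrier R. a \<notin> p \<and> (\<forall>q\<in>Spec R. q \<noteq> p \<longrightarrow> a \<in> q)" by blast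
next
  assume "\<exists>a\<in>carrier R. a \<notin> p \<and> (\<forall>q\<in>Spec R. q \<noteq> p \<longrightarrow> a \<in> q)"
  then obtain a where a: "a \<in> carrier R" "a \<notin> p" "\<And>q. q \<in> Spec R \<Longrightarrow> q \<noteq> p \<Longrightarrow> a \<in> q"
    by blast
  have p: "primeideal p R" using assms(2) by (simp add: Spec_def)
  have "zariski_closed R (Spec R - {p})"
    unfolding zariski_closed_def by (rule exI[of _ "{a}"]) (use a in auto)
  moreover have "zariski_closed R {p}"
    unfolding zariski_closed_def
  proof (rule exI[of _ p], intro conjI)
    show "p \<subseteq> carrier R" using ideal.Icarr[OF primeideal.axioms(1)[OF p]] by blast
    show "{p} = {q \<in> Spec R. p \<subseteq> q}"
      using vnr_primeideal_incomparable[OF assms(1) p] assms(2) by (auto simp: Spec_def)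
  qed
  ultimately show "isolated_point R p"
    unfolding isolated_point_def zariski_open_def using assms(2) by simp
qed

lemma (in cring) ideal_colon:
  assumes "ideal I R" "w \<in> carrier R"
  shows "ideal {x \<in> carrier R. w \<otimes> x \<in> I} R"
proof -
  interpret I: ideal I R by fact
  show ?thesis
  proof (rule idealI[OF ring_axioms])
    show "subgroup {x \<in> carrier R. w \<otimes> x \<in> I} (add_monoid R)"
    proof (rule subgroup.intro)
      fix x y assume "x \<in> {x \<in> carrier R. w \<otimes> x \<in> I}" "y \<in> {x \<in> carrier R. w \<otimes> x \<in> I}"
      then show "x \<otimes>\<^bsub>add_monoid R\<^esub> y \<in> {x \<in> carrier R. w \<otimes> x \<in> I}"
        using assms(2) by (auto simp: r_distr I.a_closed)
    next
      fix x assume x: "x \<in> {x \<in> carrier R. w \<otimes> x \<in> I}"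
      then have "w \<otimes> (\<ominus> x) = \<ominus> (w \<otimes> x)" using assms(2) by (simp add: r_minus)
      then show "inv\<^bsub>add_monoid R\<^esub> x \<in> {x \<in> carrier R. w \<otimes> x \<in> I}"
        using x by (auto simp: a_inv_def[symmetric] I.a_inv_closed)
    qed (use assms(2) in auto)
  next
    fix a x assume a: "a \<in> {x \<in> carrier R. w \<otimes> x \<in> I}" and x: "x \<in> carrier R"
    then have "w \<otimes> (x \<otimes> a) = x \<otimes> (w \<otimes> a)" using assms(2) by (simp add: m_lcomm)
    then show "x \<otimes> a \<in> {x \<in> carrier R. w \<otimes> x \<in> I}"
      using a x by (simp add: I.I_l_closed)
  next
    fix a x assume "a \<in> {x \<in> carrier R. w \<otimes> x \<in> I}" "x \<in> carrier R"
    then show "a \<otimes> x \<in> {x \<in> carrier R. w \<otimes> x \<in> I}"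
      using assms(2) by (auto simp: m_assoc[symmetric] I.I_r_closed)
  qed
qed

lemma (in ideal) rcos_eq_self_iff:
  assumes "x \<in> carrier R"
  shows "I +> x = I \<longleftrightarrow> x \<in> I"
  using a_rcos_self[OF assms] a_rcos_zero[OF is_ideal] by auto

lemma FactRing_zero: "\<zero>\<^bsub>R Quot I\<^esub> = I"
  by (simp add: FactRing_def)

context
  fixes A :: "('a, 'm) ring_scheme" and R :: "('c, 'n) ring_scheme" and f :: "'a \<Rightarrow> 'c" and I :: "'c set"
  assumes A: "ring A" and R: "ring R" and f: "f \<in> ring_hom A R" and I: "ideal I R"
begin

interpretation A: ring A by (rule A)
interpretation R: ring R by (rule R)
interpretation I: ideal I R by (rule I)
interpretation f: ring_hom_ring A R f by (rule ring_hom_ringI2[OF A R f])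

lemma quotient_comp_ring_hom: "(\<lambda>a. I +>\<^bsub>R\<^esub> f a) \<in> ring_hom A (R Quot I)"
  using ring_hom_trans[OF f I.rcos_ring_hom] by (simp add: comp_def)

lemma inj_on_quotient_comp_iff:
  "inj_on (\<lambda>a. I +>\<^bsub>R\<^esub> f a) (carrier A) \<longleftrightarrow> (\<forall>a\<in>carrier A. f a \<in> I \<longrightarrow> a = \<zero>\<^bsub>A\<^esub>)"
proof -
  interpret g: ring_hom_ring A "R Quot I" "\<lambda>a. I +>\<^bsub>R\<^esub> f a"
    by (rule ring_hom_ringI2[OF A I.quotient_is_ring quotient_comp_ring_hom])
  have "a_kernel A (R Quot I) (\<lambda>a. I +>\<^bsub>R\<^esub> f a) = {a \<in> carrier A. f a \<in> I}"
    unfolding a_kernel_def' FactRing_zero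
    by (rule Collect_cong) (use I.rcos_eq_self_iff f.hom_closed in blast)
  then show ?thesis using g.inj_iff_trivial_ker I.zero_closed by auto
qed

lemma essential_extension_quotientD:
  assumes ess: "essential_extension A (R Quot I) (\<lambda>a. I +>\<^bsub>R\<^esub> f a)"
    and J: "ideal J R" "I \<subset> J"
  shows "\<exists>a\<in>carrier A. f a \<in> J \<and> f a \<notin> I"
proof -
  obtain x where x: "x \<in> J" "x \<notin> I" using J(2) by blast
  then have "I +>\<^bsub>R\<^esub> x \<noteq> I" using I.rcos_eq_self_iff[OF ideal.Icarr[OF J(1) x(1)]] by simp
  then have "(+>\<^bsub>R\<^esub>) I ` J \<noteq> {\<zero>\<^bsub>R Quot I\<^esub>}" using x(1) by (auto simp: FactRing_zero)
  with ess R.ring_ideal_imp_quot_ideal[OF I J(1)]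
  obtain a where a: "a \<in> carrier A" "I +>\<^bsub>R\<^esub> f a \<in> (+>\<^bsub>R\<^esub>) I ` J"
      "I +>\<^bsub>R\<^esub> f a \<noteq> \<zero>\<^bsub>R Quot I\<^esub>"
    unfolding essential_extension_def by meson
  then obtain j where "j \<in> J" "I +>\<^bsub>R\<^esub> f a = I +>\<^bsub>R\<^esub> j" by blast
  then have "f a \<in> (\<Union>j\<in>J. I +>\<^bsub>R\<^esub> j)"
    using I.a_rcos_self[OF f.hom_closed[OF a(1)]] by (metis UN_I)
  moreover have eq: "J = (\<Union>j\<in>J. I +>\<^bsub>R\<^esub> j)"
    using R.ideal_incl_iff[OF I J(1)] psubset_imp_subset[OF J(2)] by (rule iffD1)
  ultimately have "f a \<in> J" by (subst eq)
  moreover have "f a \<notin> I"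
    using a(3) I.rcos_eq_self_iff[OF f.hom_closed[OF a(1)]] by (simp add: FactRing_zero)
  ultimately show ?thesis using a(1) by blast
qed

lemma essential_extension_quotientI:
  assumes faithful: "\<And>a. a \<in> carrier A \<Longrightarrow> f a \<in> I \<Longrightarrow> a = \<zero>\<^bsub>A\<^esub>"
    and above: "\<And>J. ideal J R \<Longrightarrow> I \<subset> J \<Longrightarrow> \<exists>a\<in>carrier A. f a \<in> J \<and> f a \<notin> I"
  shows "essential_extension A (R Quot I) (\<lambda>a. I +>\<^bsub>R\<^esub> f a)"
  unfolding essential_extension_def
proof (intro conjI allI impI quotient_comp_ring_hom)
  show "inj_on (\<lambda>a. I +>\<^bsub>R\<^esub> f a) (carrier A)" using inj_on_quotient_comp_iff faithful by blast
  fix J' assume J': "ideal J' (R Quot I) \<and> J' \<noteq> {\<zero>\<^bsub>R Quot I\<^esub>}"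
  have sub: "J' \<subseteq> carrier (R Quot I)"
    using additive_subgroup.a_subset[OF ideal.axioms(1)] J' by blast
  have mem: "x \<in> \<Union>J' \<longleftrightarrow> I +>\<^bsub>R\<^esub> x \<in> J'" if "x \<in> carrier R" for x
    using R.canonical_proj_vimage_mem_iff[OF I sub that] .
  have "I \<in> J'"
    using additive_subgroup.zero_closed[OF ideal.axioms(1)[OF conjunct1[OF J']]]
    by (simp add: FactRing_zero)
  then have "I \<subseteq> \<Union>J'" by blast
  moreover obtain X where X: "X \<in> J'" "X \<noteq> I" using J' \<open>I \<in> J'\<close> by (auto simp: FactRing_zero)
  obtain x where x: "x \<in> carrier R" "X = I +>\<^bsub>R\<^esub> x"
    using sub X(1) by (auto simp: FactRing_def A_RCOSETS_def')
  have "x \<in> \<Union>J'" "x \<notin> I" using mem[OF x(1)] X x I.rcos_eq_self_iff[OF x(1)] by auto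
  ultimately have "I \<subset> \<Union>J'" by blast
  then obtain a where a: "a \<in> carrier A" "f a \<in> \<Union>J'" "f a \<notin> I"
    using above R.quot_ideal_imp_ring_ideal[OF I] J' by blast
  then show "\<exists>a\<in>carrier A. I +>\<^bsub>R\<^esub> f a \<in> J' \<and> I +>\<^bsub>R\<^esub> f a \<noteq> \<zero>\<^bsub>R Quot I\<^esub>"
    using mem[OF f.hom_closed[OF a(1)]] I.rcos_eq_self_iff[OF f.hom_closed[OF a(1)]]
    by (auto simp: FactRing_zero)
qed

end

lemma (in domain) idempotent_eq_one:
  assumes "u \<in> carrier R" "u \<otimes> u = u" "u \<noteq> \<zero>"
  shows "u = \<one>"
  using m_lcancel[OF assms(3,1) assms(1) one_closed] assms(1,2) by simp

lemma prod_ring_simps: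
  "carrier (prod_ring S K) = PiE S (\<lambda>q. carrier (K q))"
  "x \<otimes>\<^bsub>prod_ring S K\<^esub> y = restrict (\<lambda>q. x q \<otimes>\<^bsub>K q\<^esub> y q) S"
  "x \<oplus>\<^bsub>prod_ring S K\<^esub> y = restrict (\<lambda>q. x q \<oplus>\<^bsub>K q\<^esub> y q) S"
  "\<one>\<^bsub>prod_ring S K\<^esub> = restrict (\<lambda>q. \<one>\<^bsub>K q\<^esub>) S"
  "\<zero>\<^bsub>prod_ring S K\<^esub> = restrict (\<lambda>q. \<zero>\<^bsub>K q\<^esub>) S"
  by (simp_all add: prod_ring_def)

lemma restrict_eq_PiE:
  assumes "x \<in> PiE S C" "\<And>q. q \<in> S \<Longrightarrow> f q = x q"
  shows "restrict f S = x"
  using assms by (auto simp: PiE_def extensional_def fun_eq_iff)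

lemma prod_ring_cring:
  assumes K: "\<And>q. q \<in> S \<Longrightarrow> cring (K q)"
  shows "cring (prod_ring S K)"
proof -
  have carr: "x q \<in> carrier (K q)" if "x \<in> PiE S (\<lambda>q. carrier (K q))" "q \<in> S" for x q
    using that by blast
  note simps = carr prod_ring_simps cring.cring_simprules[OF K]
    monoid.r_one[OF ring.is_monoid[OF cring.axioms(1)[OF K]]]
  show ?thesis
  proof (rule cringI)
    show "abelian_group (prod_ring S K)"
    proof (rule abelian_groupI)
      fix x assume x: "x \<in> carrier (prod_ring S K)"
      show "\<exists>y\<in>carrier (prod_ring S K). y \<oplus>\<^bsub>prod_ring S K\<^esub> x = \<zero>\<^bsub>prod_ring S K\<^esub>"
      proof (rule bexI[of _ "restrict (\<lambda>q. \<ominus>\<^bsub>K q\<^esub> x q) S"])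
        show "restrict (\<lambda>q. \<ominus>\<^bsub>K q\<^esub> x q) S \<oplus>\<^bsub>prod_ring S K\<^esub> x = \<zero>\<^bsub>prod_ring S K\<^esub>"
          using x by (auto simp: simps
              intro!: restrict_ext abelian_group.l_neg[OF ring.is_abelian_group[OF cring.axioms(1)[OF K]]])
      qed (use x in \<open>auto simp: simps\<close>)
    qed (auto simp: simps intro!: restrict_ext restrict_eq_PiE)
  next
    show "comm_monoid (prod_ring S K)"
      by (rule comm_monoidI) (auto simp: simps intro!: restrict_ext restrict_eq_PiE)
  qed (auto simp: simps intro!: restrict_ext)
qed

locale spectral_field_product =
  fixes A :: "'a ring" and K :: "'a set \<Rightarrow> 'b ring" and phi :: "'a set \<Rightarrow> 'a \<Rightarrow> 'b"
  assumes A_cring: "cring A" and A_vnr: "von_neumann_regular A"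
    and K_field: "\<And>q. q \<in> Spec A \<Longrightarrow> field (K q)"
    and phi_hom: "\<And>q. q \<in> Spec A \<Longrightarrow> phi q \<in> ring_hom A (K q)"
    and phi_eq_zero_iff: "\<And>q a. q \<in> Spec A \<Longrightarrow> a \<in> carrier A \<Longrightarrow> phi q a = \<zero>\<^bsub>K q\<^esub> \<longleftrightarrow> a \<in> q"
begin

sublocale A: cring A by (rule A_cring)

abbreviation B :: "('a set \<Rightarrow> 'b) ring" where "B \<equiv> prod_ring (Spec A) K"
abbreviation diag :: "'a \<Rightarrow> 'a set \<Rightarrow> 'b" where "diag \<equiv> diag_map A phi"

lemma Spec_ideal: "q \<in> Spec A \<Longrightarrow> ideal q A"
  by (simp add: Spec_def primeideal.axioms(1))

lemma K_cring: "q \<in> Spec A \<Longrightarrow> cring (K q)"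
  using K_field fieldE(1) by blast

lemma K_domain: "q \<in> Spec A \<Longrightarrow> domain (K q)"
  using K_field field.axioms(1) by blast

lemmas K_simps [simp] = cring.cring_simprules[OF K_cring]
  monoid.r_one[OF ring.is_monoid[OF cring.axioms(1)[OF K_cring]]]
  ring_hom_closed[OF phi_hom] ring_hom_mult[OF phi_hom] ring_hom_add[OF phi_hom] ring_hom_one[OF phi_hom]

sublocale B: cring B by (rule prod_ring_cring) (rule K_cring)

lemma B_simps [simp]:
  "q \<in> Spec A \<Longrightarrow> (x \<otimes>\<^bsub>B\<^esub> y) q = x q \<otimes>\<^bsub>K q\<^esub> y q"
  "q \<in> Spec A \<Longrightarrow> (x \<oplus>\<^bsub>B\<^esub> y) q = x q \<oplus>\<^bsub>K q\<^esub> y q"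
  "q \<in> Spec A \<Longrightarrow> \<zero>\<^bsub>B\<^esub> q = \<zero>\<^bsub>K q\<^esub>"
  "q \<in> Spec A \<Longrightarrow> \<one>\<^bsub>B\<^esub> q = \<one>\<^bsub>K q\<^esub>"
  "q \<in> Spec A \<Longrightarrow> diag a q = phi q a"
  "x \<in> carrier B \<Longrightarrow> q \<in> Spec A \<Longrightarrow> x q \<in> carrier (K q)"
  by (auto simp: prod_ring_simps diag_map_def)

lemma B_eqI:
  "x \<in> carrier B \<Longrightarrow> y \<in> carrier B \<Longrightarrow> (\<And>q. q \<in> Spec A \<Longrightarrow> x q = y q) \<Longrightarrow> x = y"
  by (rule PiE_ext) (auto simp: prod_ring_simps)

lemma diag_hom: "diag \<in> ring_hom A B"
proof (rule ring_hom_memI)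
  fix x y assume xy: "x \<in> carrier A" "y \<in> carrier A"
  show "diag x \<in> carrier B" using xy by (auto simp: prod_ring_simps diag_map_def)
  then show "diag (x \<otimes>\<^bsub>A\<^esub> y) = diag x \<otimes>\<^bsub>B\<^esub> diag y" "diag (x \<oplus>\<^bsub>A\<^esub> y) = diag x \<oplus>\<^bsub>B\<^esub> diag y"
    using xy by (auto simp: prod_ring_simps diag_map_def intro!: restrict_ext)
qed (auto simp: prod_ring_simps diag_map_def intro!: restrict_ext)

lemma diag_closed [simp]: "a \<in> carrier A \<Longrightarrow> diag a \<in> carrier B"
  using ring_hom_closed[OF diag_hom] .

lemma diag_eq_zeroD:
  assumes "a \<in> carrier A" "diag a = \<zero>\<^bsub>B\<^esub>"
  shows "a = \<zero>\<^bsub>A\<^esub>"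
proof (rule ccontr)
  assume "a \<noteq> \<zero>\<^bsub>A\<^esub>"
  then obtain q where q: "primeideal q A" "a \<notin> q"
    using A.vnr_ex_primeideal_not_mem[OF A_vnr assms(1)] by blast
  then have "q \<in> Spec A" by (simp add: Spec_def)
  then have "phi q a = \<zero>\<^bsub>K q\<^esub>" using arg_cong[OF assms(2), of "\<lambda>x. x q"] by simp
  then show False using phi_eq_zero_iff[OF \<open>q \<in> Spec A\<close> assms(1)] q(2) by simp
qed

end

locale spectral_field_product_at = spectral_field_product +
  fixes p :: "'a set"
  assumes p_Spec: "p \<in> Spec A"
begin

abbreviation e :: "'a set \<Rightarrow> 'b" where
  "e \<equiv> (\<lambda>q\<in>Spec A. if q = p then \<zero>\<^bsub>K q\<^esub> else \<one>\<^bsub>K q\<^esub>)"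

abbreviation \<delta> :: "'a set \<Rightarrow> 'b" where
  "\<delta> \<equiv> (\<lambda>q\<in>Spec A. if q = p then \<one>\<^bsub>K q\<^esub> else \<zero>\<^bsub>K q\<^esub>)"

abbreviation V :: "('a set \<Rightarrow> 'b) set" where
  "V \<equiv> {x \<in> carrier B. x p = \<zero>\<^bsub>K p\<^esub>}"

lemma e_closed [simp]: "e \<in> carrier B" and delta_closed [simp]: "\<delta> \<in> carrier B"
  by (auto simp: prod_ring_simps)

lemma e_mult_V: "x \<in> V \<Longrightarrow> e \<otimes>\<^bsub>B\<^esub> x = x"
  by (rule B_eqI) auto

lemma e_multiples_eq_V: "{e \<otimes>\<^bsub>B\<^esub> b | b. b \<in> carrier B} = V"
proof (intro equalityI subsetI)
  fix x assume "x \<in> {e \<otimes>\<^bsub>B\<^esub> b | b. b \<in> carrier B}"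
  then obtain b where "b \<in> carrier B" "x = e \<otimes>\<^bsub>B\<^esub> b" by blast
  then show "x \<in> V" using p_Spec by simp
next
  fix x assume x: "x \<in> V"
  then have "x = e \<otimes>\<^bsub>B\<^esub> x \<and> x \<in> carrier B" using e_mult_V by simp
  then show "x \<in> {e \<otimes>\<^bsub>B\<^esub> b | b. b \<in> carrier B}" by blast
qed

lemma e_mult_delta: "e \<otimes>\<^bsub>B\<^esub> \<delta> = \<zero>\<^bsub>B\<^esub>"
  by (rule B_eqI) auto

lemma delta_notin_V: "\<delta> \<notin> V"
  using p_Spec domain.one_not_zero[OF K_domain[OF p_Spec]] by simp

lemma diag_mem_V_iff: "a \<in> carrier A \<Longrightarrow> diag a \<in> V \<longleftrightarrow> a \<in> p"
  using phi_eq_zero_iff[OF p_Spec] p_Spec by simp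

lemma delta_mem_ideal:
  assumes "ideal J B" "x \<in> J" "x p \<noteq> \<zero>\<^bsub>K p\<^esub>"
  shows "\<delta> \<in> J"
proof -
  have x: "x \<in> carrier B" using ideal.Icarr[OF assms(1,2)] .
  then have "x p \<in> Units (K p)"
    using field.field_Units[OF K_field[OF p_Spec]] assms(3) p_Spec by simp
  note unit = this monoid.Units_inv_closed[OF ring.is_monoid[OF cring.axioms(1)[OF K_cring[OF p_Spec]]] this]
    monoid.Units_r_inv[OF ring.is_monoid[OF cring.axioms(1)[OF K_cring[OF p_Spec]]] this]
  define c where "c = (\<lambda>q\<in>Spec A. if q = p then inv\<^bsub>K p\<^esub> (x p) else \<zero>\<^bsub>K q\<^esub>)"
  have c: "c \<in> carrier B" using unit by (auto simp: c_def prod_ring_simps)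
  have "x \<otimes>\<^bsub>B\<^esub> c = \<delta>"
    by (rule B_eqI) (use x c unit in \<open>auto simp: c_def\<close>)
  then show ?thesis using ideal.I_r_closed[OF assms(1,2) c] by simp
qed

lemma isolated_point_imp_diag_eq_delta:
  assumes "isolated_point A p"
  obtains u where "u \<in> carrier A" "diag u = \<delta>"
proof -
  obtain a where a: "a \<in> carrier A" "a \<notin> p" "\<And>q. q \<in> Spec A \<Longrightarrow> q \<noteq> p \<Longrightarrow> a \<in> q"
    using assms A.vnr_isolated_point_iff[OF A_vnr p_Spec] by blast
  obtain u y where u: "u \<in> carrier A" "y \<in> carrier A" "u \<otimes>\<^bsub>A\<^esub> u = u" "u = a \<otimes>\<^bsub>A\<^esub> y" "a \<otimes>\<^bsub>A\<^esub> u = a"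
    using A.vnr_ex_idempotent_generator[OF A_vnr a(1)] .
  have "u \<notin> p"
  proof
    assume "u \<in> p"
    then have "a \<otimes>\<^bsub>A\<^esub> u \<in> p" using ideal.I_l_closed[OF Spec_ideal[OF p_Spec] _ a(1)] by blast
    with u(5) a(2) show False by simp
  qed
  then have "phi p u \<noteq> \<zero>\<^bsub>K p\<^esub>" using phi_eq_zero_iff[OF p_Spec u(1)] by simp
  moreover have "phi p u \<otimes>\<^bsub>K p\<^esub> phi p u = phi p u"
    using ring_hom_mult[OF phi_hom[OF p_Spec] u(1) u(1)] u(3) by simp
  ultimately have "phi p u = \<one>\<^bsub>K p\<^esub>"
    using domain.idempotent_eq_one[OF K_domain[OF p_Spec]] u(1) p_Spec by simp
  moreover have "phi q u = \<zero>\<^bsub>K q\<^esub>" if "q \<in> Spec A" "q \<noteq> p" for q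
    using ideal.I_r_closed[OF Spec_ideal[OF that(1)] a(3)[OF that] u(2)] u(4)
      phi_eq_zero_iff[OF that(1) u(1)] by simp
  ultimately have "diag u = \<delta>" by (intro B_eqI) (auto simp: u(1))
  then show thesis using that u(1) by blast
qed

lemma essential_quotient_imp_isolated_point:
  assumes I: "ideal I B" "I \<subseteq> V"
    and ess: "essential_extension A (B Quot I) (\<lambda>a. I +>\<^bsub>B\<^esub> diag a)"
  shows "isolated_point A p"
proof -
  note quotient = A.ring_axioms B.ring_axioms diag_hom I(1)
  have faithful: "\<And>a. a \<in> carrier A \<Longrightarrow> diag a \<in> I \<Longrightarrow> a = \<zero>\<^bsub>A\<^esub>"
    using ess inj_on_quotient_comp_iff[OF quotient] by (simp add: essential_extension_def)
  define J where "J = {x \<in> carrier B. e \<otimes>\<^bsub>B\<^esub> x \<in> I}"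
  have J: "ideal J B" unfolding J_def by (rule B.ideal_colon[OF I(1) e_closed])
  have "I \<subseteq> J" unfolding J_def using ideal.I_l_closed[OF I(1) _ e_closed] ideal.Icarr[OF I(1)] by blast
  moreover have "\<delta> \<in> J" "\<delta> \<notin> I"
    using e_mult_delta additive_subgroup.zero_closed[OF ideal.axioms(1)[OF I(1)]] delta_notin_V I(2)
    by (auto simp: J_def)
  ultimately have "I \<subset> J" by blast
  then obtain a where a: "a \<in> carrier A" "e \<otimes>\<^bsub>B\<^esub> diag a \<in> I" "diag a \<notin> I"
    using essential_extension_quotientD[OF quotient ess J] unfolding J_def by blast
  have "a \<notin> p"
    using diag_mem_V_iff[OF a(1)] e_mult_V a(2,3) by auto
  moreover have "a \<in> q" if q: "q \<in> Spec A" "q \<noteq> p" for q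
  proof (rule ccontr)
    assume "a \<notin> q"
    have "\<not> p \<subseteq> q"
      using A.vnr_primeideal_incomparable[OF A_vnr] p_Spec q by (auto simp: Spec_def)
    then obtain u where u: "u \<in> p" "u \<notin> q" by blast
    have uA: "u \<in> carrier A" using ideal.Icarr[OF Spec_ideal[OF p_Spec] u(1)] .
    have "diag (a \<otimes>\<^bsub>A\<^esub> u) = diag a \<otimes>\<^bsub>B\<^esub> (e \<otimes>\<^bsub>B\<^esub> diag u)"
      using ring_hom_mult[OF diag_hom a(1) uA] e_mult_V diag_mem_V_iff[OF uA] u(1) by simp
    also have "\<dots> = (e \<otimes>\<^bsub>B\<^esub> diag a) \<otimes>\<^bsub>B\<^esub> diag u"
      using a(1) uA by (simp add: B.m_lcomm B.m_assoc)
    finally have "diag (a \<otimes>\<^bsub>A\<^esub> u) \<in> I"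
      using ideal.I_r_closed[OF I(1) a(2) diag_closed[OF uA]] by simp
    then have "a \<otimes>\<^bsub>A\<^esub> u = \<zero>\<^bsub>A\<^esub>" using faithful a(1) uA by simp
    then have "a \<otimes>\<^bsub>A\<^esub> u \<in> q"
      using additive_subgroup.zero_closed[OF ideal.axioms(1)[OF Spec_ideal[OF q(1)]]] by simp
    then show False
      using primeideal.I_prime[of q A a u] q(1) a(1) uA u(2) \<open>a \<notin> q\<close> by (simp add: Spec_def)
  qed
  ultimately show ?thesis using A.vnr_isolated_point_iff[OF A_vnr p_Spec] a(1) by blast
qed

lemma isolated_point_imp_essential_quotient:
  assumes "isolated_point A p"
  obtains I where "ideal I B" "I \<subseteq> V" "essential_extension A (B Quot I) (\<lambda>a. I +>\<^bsub>B\<^esub> diag a)"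
proof -
  obtain u where u: "u \<in> carrier A" "diag u = \<delta>"
    using isolated_point_imp_diag_eq_delta[OF assms] .
  define Q where "Q J \<longleftrightarrow> J \<subseteq> V \<and> (\<forall>a\<in>carrier A. diag a \<in> J \<longrightarrow> a = \<zero>\<^bsub>A\<^esub>)" for J
  have "Q {\<zero>\<^bsub>B\<^esub>}" using diag_eq_zeroD p_Spec by (auto simp: Q_def)
  moreover have "Q (\<Union>C)" if "subset.chain {J. ideal J B \<and> Q J} C" for C
    using that unfolding Q_def pred_on.chain_def by blast
  ultimately obtain I where I: "ideal I B" "Q I"
    and max: "\<And>J. ideal J B \<Longrightarrow> Q J \<Longrightarrow> I \<subseteq> J \<Longrightarrow> J = I"
    by (rule B.ex_maximal_ideal_with[OF B.zeroideal]) auto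
  have "\<exists>a\<in>carrier A. diag a \<in> J \<and> diag a \<notin> I" if J: "ideal J B" "I \<subset> J" for J
  proof (cases "J \<subseteq> V")
    case True
    then have "\<not> Q J" using max[OF J(1)] J(2) by blast
    then obtain a where "a \<in> carrier A" "diag a \<in> J" "a \<noteq> \<zero>\<^bsub>A\<^esub>" using True by (auto simp: Q_def)
    then show ?thesis using I(2) by (auto simp: Q_def)
  next
    case False
    then obtain x where "x \<in> J" "x p \<noteq> \<zero>\<^bsub>K p\<^esub>" using ideal.Icarr[OF J(1)] by blast
    then have "diag u \<in> J" using delta_mem_ideal[OF J(1)] u(2) by simp
    moreover have "diag u \<notin> I" using u(2) delta_notin_V I(2) by (auto simp: Q_def)
    ultimately show ?thesis using u(1) by blast
  qed
  then have "essential_extension A (B Quot I) (\<lambda>a. I +>\<^bsub>B\<^esub> diag a)"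
    using essential_extension_quotientI[OF A.ring_axioms B.ring_axioms diag_hom I(1)] I(2)
    by (simp add: Q_def)
  then show thesis using that I by (simp add: Q_def)
qed

lemma isolated_point_iff_essential_quotient:
  "isolated_point A p \<longleftrightarrow>
    (\<exists>I. ideal I B \<and> I \<subseteq> V \<and> essential_extension A (B Quot I) (\<lambda>a. I +>\<^bsub>B\<^esub> diag a))"
proof
  assume "isolated_point A p"
  then obtain I where "ideal I B" "I \<subseteq> V" "essential_extension A (B Quot I) (\<lambda>a. I +>\<^bsub>B\<^esub> diag a)"
    by (rule isolated_point_imp_essential_quotient)
  then show "\<exists>I. ideal I B \<and> I \<subseteq> V \<and> essential_extension A (B Quot I) (\<lambda>a. I +>\<^bsub>B\<^esub> diag a)"
    by blast
qed (use essential_quotient_imp_isolated_point in blast)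

end

theorem mainTheorem9:
  fixes A :: "'a ring" and P :: "'a set" and K :: "'a set \<Rightarrow> 'b ring"
    and phi :: "'a set \<Rightarrow> 'a \<Rightarrow> 'b" and p :: "'a set"
  assumes "poring A P" and "real_ring A" and "von_neumann_regular A" and "baer_ring A"
    and "p \<in> Spec A"
    and "epof A P K phi"
  shows "isolated_point A p \<longleftrightarrow>
    (let B = prod_ring (Spec A) K;
         e = (\<lambda>q\<in>Spec A. if q = p then \<zero>\<^bsub>K q\<^esub> else \<one>\<^bsub>K q\<^esub>)
     in \<exists>I. ideal I B \<and> I \<subseteq> {e \<otimes>\<^bsub>B\<^esub> b | b. b \<in> carrier B}
          \<and> essential_extension A (B Quot I) (\<lambda>a. I +>\<^bsub>B\<^esub> diag_map A phi a))"
proof -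
  interpret spectral_field_product_at A K phi p
  proof (intro spectral_field_product_at.intro spectral_field_product.intro
      spectral_field_product_at_axioms.intro)
    show "cring A" using assms(1) by (simp add: poring_def)
    show "von_neumann_regular A" "p \<in> Spec A" by fact+
    fix q assume q: "q \<in> Spec A"
    then have "real_closed_field (K q)" "phi q \<in> ring_hom A (K q)"
      and ker: "{a \<in> carrier A. phi q a = \<zero>\<^bsub>K q\<^esub>} = q"
      using assms(6) unfolding epof_def by blast+
    then show "field (K q)" "phi q \<in> ring_hom A (K q)" by (simp_all add: real_closed_field_def)
    show "phi q a = \<zero>\<^bsub>K q\<^esub> \<longleftrightarrow> a \<in> q" if "a \<in> carrier A" for a
      using arg_cong[OF ker, of "\<lambda>S. a \<in> S"] that by simp
  qed
  show ?thesis
    unfolding Let_def e_multiples_eq_V by (rule isolated_point_iff_essential_quotient)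
qed

end
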